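(* Let $X$ be a compact Hausdorff space and $\phi_1,\dots,\phi_m$ real-valued continuous functions on $X$. Let $\mathcal C(X,1,\boldsymbol\phi)$ be the set of positive scalar Borel measures $\mu$ on $X$ with $\mu(X)=1$ and $\int_X\phi_i\,d\mu=0$ for $i=1,\dots,m$. Suppose $\mu=\sum_{j=1}^n w_j\delta_{x_j}$ where $1\le n\le m+1$, $x_1,\dots,x_n$ are distinct points of $X$, and the real numbers $w_j$ satisfy $w_j>0$, $\sum_{j=1}^nw_j=1$, and $\sum_{j=1}^n\phi_i(x_j)w_j=0$ for $i=1,\dots,m$. Write $\boldsymbol\phi(x_j)=(\phi_1(x_j),\dots,\phi_m(x_j))^{T}\in\mathbb{R}^m$. Then $\mu$ is an extreme point of $\mathcal C(X,1,\boldsymbol\phi)$ if and only if $0=\sum_{j=1}^nw_j\boldsymbol\phi(x_j)$ is an interior point of the convex hull of $\{\boldsymbol\phi(x_1),\dots,\boldsymbol\phi(x_n)\}$ in $\mathbb{R}^m$.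
   Context: $\delta_x$ denotes the unit point-mass at $x$. A vector $v$ is an interior point of the convex hull of $\{u_1,\dots,u_n\}\subset\mathbb R^m$ if $v=\sum_j\lambda_ju_j$ with $\lambda_j>0$, $\sum_j\lambda_j=1$, and the coefficients $\lambda_1,\dots,\lambda_n$ are uniquely determined by these conditions. *)

theory Defs
  imports "HOL-Analysis.Analysis" "HOL-Probability.Probability"
begin

definition moment_set :: "nat \<Rightarrow> (nat \<Rightarrow> 'a::topological_space \<Rightarrow> real) \<Rightarrow> 'a measure set" where
  "moment_set m \<phi> = {M. sets M = sets borel \<and> emeasure M (space M) = 1 \<and>
      (\<forall>i<m. integrable M (\<phi> i) \<and> integral\<^sup>L M (\<phi> i) = 0)}"

definition extreme_measure :: "'a measure set \<Rightarrow> 'a measure \<Rightarrow> bool" where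
  "extreme_measure C \<mu> \<longleftrightarrow> \<mu> \<in> C \<and>
     (\<forall>\<nu>1\<in>C. \<forall>\<nu>2\<in>C. \<forall>t::real. 0 < t \<and> t < 1 \<and>
        (\<forall>A\<in>sets \<mu>. emeasure \<mu> A = ennreal t * emeasure \<nu>1 A + ennreal (1 - t) * emeasure \<nu>2 A)
        \<longrightarrow> \<nu>1 = \<mu> \<and> \<nu>2 = \<mu>)"

definition dirac_comb :: "nat \<Rightarrow> (nat \<Rightarrow> real) \<Rightarrow> (nat \<Rightarrow> 'a::topological_space) \<Rightarrow> 'a measure" where
  "dirac_comb n w x = measure_of UNIV (sets borel)
      (\<lambda>A. \<Sum>j<n. ennreal (w j) * indicator A (x j))"

text \<open>v (in R^m, coordinates i<m) is an interior point of the convex hull of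
  u_0,...,u_{n-1}: v = sum lambda_j u_j with lambda_j > 0, sum lambda_j = 1, and the
  coefficients are uniquely determined by these conditions.\<close>
definition conv_coeffs :: "nat \<Rightarrow> nat \<Rightarrow> (nat \<Rightarrow> nat \<Rightarrow> real) \<Rightarrow> (nat \<Rightarrow> real) \<Rightarrow> (nat \<Rightarrow> real) \<Rightarrow> bool" where
  "conv_coeffs m n u v l \<longleftrightarrow> (\<forall>j<n. l j > 0) \<and> (\<Sum>j<n. l j) = 1 \<and>
     (\<forall>i<m. v i = (\<Sum>j<n. l j * u j i))"

definition interior_conv_point :: "nat \<Rightarrow> nat \<Rightarrow> (nat \<Rightarrow> nat \<Rightarrow> real) \<Rightarrow> (nat \<Rightarrow> real) \<Rightarrow> bool" where
  "interior_conv_point m n u v \<longleftrightarrow> (\<exists>l. conv_coeffs m n u v l) \<and>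
     (\<forall>l l'. conv_coeffs m n u v l \<and> conv_coeffs m n u v l' \<longrightarrow> (\<forall>j<n. l j = l' j))"

end

theory Submission
  imports Defs
begin

text \<open>A probability measure in the moment set that is dominated by a multiple of the
  atomic measure \<open>\<mu>\<close> with weights \<open>w\<close> at the points \<open>x\<^sub>j\<close> is itself atomic on these
  points, and its weights satisfy the same linear moment equations as \<open>w\<close>.
  If \<open>\<mu> = t \<nu>\<^sub>1 + (1 - t) \<nu>\<^sub>2\<close>, the weights \<open>a\<close> of \<open>\<nu>\<^sub>1\<close> are nonnegative, so \<open>(w + a) / 2\<close> is
  a second vector of positive barycentric coordinates of 0, and uniqueness forces \<open>a = w\<close>.
  Conversely, if \<open>l\<close> is another vector of positive barycentric coordinates, the line through
  \<open>l\<close> and \<open>w\<close> stays in the open simplex slightly beyond \<open>w\<close>; this writes \<open>\<mu>\<close> as a proper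
  convex combination of the atomic measures with weights \<open>l\<close> and \<open>l\<^sub>2\<close>, and extremality
  forces \<open>l = w\<close>.\<close>

definition affine_coeffs :: "nat \<Rightarrow> nat \<Rightarrow> (nat \<Rightarrow> nat \<Rightarrow> real) \<Rightarrow> (nat \<Rightarrow> real) \<Rightarrow> (nat \<Rightarrow> real) \<Rightarrow> bool" where
  "affine_coeffs m n u v l \<longleftrightarrow> (\<Sum>j<n. l j) = 1 \<and> (\<forall>i<m. v i = (\<Sum>j<n. l j * u j i))"

lemma conv_coeffs_iff_affine_coeffs:
  "conv_coeffs m n u v l \<longleftrightarrow> (\<forall>j<n. l j > 0) \<and> affine_coeffs m n u v l"
  unfolding conv_coeffs_def affine_coeffs_def by blast

lemma affine_coeffs_combination:
  assumes "affine_coeffs m n u v l" and "affine_coeffs m n u v l'"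
  shows "affine_coeffs m n u v (\<lambda>j. s * l j + (1 - s) * l' j)"
  unfolding affine_coeffs_def
proof (intro conjI allI impI)
  have "(\<Sum>j<n. s * l j + (1 - s) * l' j) = s * (\<Sum>j<n. l j) + (1 - s) * (\<Sum>j<n. l' j)"
    by (simp add: sum.distrib sum_distrib_left)
  then show "(\<Sum>j<n. s * l j + (1 - s) * l' j) = 1"
    using assms by (simp add: affine_coeffs_def)
  fix i assume "i < m"
  have "(\<Sum>j<n. (s * l j + (1 - s) * l' j) * u j i) =
      s * (\<Sum>j<n. l j * u j i) + (1 - s) * (\<Sum>j<n. l' j * u j i)"
    by (simp add: sum.distrib sum_distrib_left distrib_right mult.assoc)
  also have "\<dots> = s * v i + (1 - s) * v i"
    using assms \<open>i < m\<close> by (simp add: affine_coeffs_def)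
  finally show "v i = (\<Sum>j<n. (s * l j + (1 - s) * l' j) * u j i)"
    by (simp add: algebra_simps)
qed

lemma interior_conv_point_iff_unique_coeffs:
  assumes "conv_coeffs m n u v w"
  shows "interior_conv_point m n u v \<longleftrightarrow> (\<forall>l. conv_coeffs m n u v l \<longrightarrow> (\<forall>j<n. l j = w j))"
proof
  assume "interior_conv_point m n u v"
  then show "\<forall>l. conv_coeffs m n u v l \<longrightarrow> (\<forall>j<n. l j = w j)"
    using assms unfolding interior_conv_point_def by blast
next
  assume unique: "\<forall>l. conv_coeffs m n u v l \<longrightarrow> (\<forall>j<n. l j = w j)"
  show "interior_conv_point m n u v"
    unfolding interior_conv_point_def
  proof (intro conjI allI impI)
    show "\<exists>l. conv_coeffs m n u v l"
      using assms by blast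
    fix l l' j
    assume "conv_coeffs m n u v l \<and> conv_coeffs m n u v l'" and "j < n"
    then have "l j = w j" and "l' j = w j"
      using unique by blast+
    then show "l j = l' j"
      by simp
  qed
qed

lemma sets_dirac_comb [simp]: "sets (dirac_comb n w x) = sets borel"
  unfolding dirac_comb_def using sets.sigma_sets_eq[of borel] sets.space_closed[of borel]
  by (simp add: sets_measure_of)

lemma space_dirac_comb [simp]: "space (dirac_comb n w x) = UNIV"
  using sets_eq_imp_space_eq[OF sets_dirac_comb] by simp

lemma emeasure_dirac_comb:
  assumes "A \<in> sets borel"
  shows "emeasure (dirac_comb n w x) A = (\<Sum>j<n. ennreal (w j) * indicator A (x j))"
  unfolding dirac_comb_def
proof (rule emeasure_measure_of_sigma)
  show "sigma_algebra UNIV (sets borel)"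
    using sets.sigma_algebra_axioms[of borel] by simp
  show "positive (sets borel) (\<lambda>A. \<Sum>j<n. ennreal (w j) * indicator A (x j))"
    by (simp add: positive_def)
  show "countably_additive (sets borel) (\<lambda>A. \<Sum>j<n. ennreal (w j) * indicator A (x j))"
  proof (unfold countably_additive_def, intro allI impI)
    fix F :: "nat \<Rightarrow> 'a set" assume "disjoint_family F"
    have "(\<Sum>i. \<Sum>j<n. ennreal (w j) * indicator (F i) (x j)) =
        (\<Sum>j<n. \<Sum>i. ennreal (w j) * indicator (F i) (x j))"
      by (rule suminf_sum) (rule summableI)
    also have "\<dots> = (\<Sum>j<n. ennreal (w j) * indicator (\<Union>i. F i) (x j))"
      using suminf_indicator[OF \<open>disjoint_family F\<close>] by simp
    finally show "(\<Sum>i. \<Sum>j<n. ennreal (w j) * indicator (F i) (x j)) =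
        (\<Sum>j<n. ennreal (w j) * indicator (\<Union>i. F i) (x j))" .
  qed
qed fact

lemma dirac_comb_cong:
  "(\<And>j. j < n \<Longrightarrow> w j = w' j) \<Longrightarrow> dirac_comb n w x = dirac_comb n w' x"
  unfolding dirac_comb_def by (intro arg_cong[where f = "measure_of UNIV (sets borel)"] ext sum.cong) auto

lemma emeasure_dirac_comb_outside:
  "emeasure (dirac_comb n w x) (UNIV - x ` {..<n}) = 0"
  for x :: "nat \<Rightarrow> 'a::t1_space"
  by (subst emeasure_dirac_comb) (auto intro: borel_open finite_imp_closed)

lemma measure_dirac_comb_point:
  fixes x :: "nat \<Rightarrow> 'a::t1_space"
  assumes "inj_on x {..<n}" and "k < n" and "\<And>j. j < n \<Longrightarrow> w j \<ge> 0"
  shows "measure (dirac_comb n w x) {x k} = w k"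
proof -
  have "(\<Sum>j<n. ennreal (w j) * indicator {x k} (x j)) = (\<Sum>j<n. if j = k then ennreal (w j) else 0)"
    using assms(1,2) by (intro sum.cong) (auto simp: inj_on_eq_iff)
  then have "emeasure (dirac_comb n w x) {x k} = ennreal (w k)"
    using assms(2) by (simp add: emeasure_dirac_comb)
  then show ?thesis using assms by (simp add: measure_def)
qed

lemma emeasure_concentrated_finite:
  fixes M :: "'a::t1_space measure"
  assumes "sets M = sets borel" and "finite S" and "emeasure M (UNIV - S) = 0"
    and "A \<in> sets borel"
  shows "emeasure M A = (\<Sum>y\<in>S. emeasure M {y} * indicator A y)"
proof -
  have "UNIV - S \<in> sets borel"
    using assms(2) by (intro borel_open open_Diff open_UNIV finite_imp_closed)
  then have "UNIV - S \<in> null_sets M"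
    using assms(1,3) by (intro null_setsI) simp_all
  moreover have "A \<in> sets M"
    using assms(1,4) by simp
  ultimately have "emeasure M A = emeasure M (A - (UNIV - S))"
    by (simp only: emeasure_Diff_null_set)
  also have "A - (UNIV - S) = S \<inter> A"
    by blast
  also have "emeasure M (S \<inter> A) = (\<Sum>y\<in>S \<inter> A. emeasure M {y})"
    using assms(1,2) by (intro emeasure_eq_sum_singleton) simp_all
  also have "\<dots> = (\<Sum>y\<in>S. emeasure M {y} * indicator A y)"
    unfolding sum.inter_restrict[OF assms(2)] by (intro sum.cong) (simp_all add: indicator_def)
  finally show ?thesis .
qed

lemma integral_concentrated_finite:
  fixes M :: "'a::t1_space measure" and f :: "'a \<Rightarrow> real"
  assumes "finite_measure M" and "sets M = sets borel" and "finite S"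
    and "emeasure M (UNIV - S) = 0" and "f \<in> borel_measurable borel"
  shows "integrable M f" and "integral\<^sup>L M f = (\<Sum>y\<in>S. measure M {y} * f y)"
proof -
  interpret finite_measure M by fact
  have space: "space M = UNIV" using sets_eq_imp_space_eq[OF assms(2)] by simp
  let ?g = "\<lambda>z. \<Sum>y\<in>S. f y * indicator {y} z"
  have g: "integrable M ?g"
    using assms(2) by (intro Bochner_Integration.integrable_sum integrable_mult_right
        integrable_real_indicator) (auto simp: less_top[symmetric])
  have "UNIV - S \<in> sets borel"
    using assms(3) by (intro borel_open open_Diff open_UNIV finite_imp_closed)
  then have "UNIV - S \<in> null_sets M"
    using assms(2,4) by (intro null_setsI) simp_all
  moreover have "?g z = f z" if "z \<in> S" for z
    using assms(3) that by (simp add: indicator_def sum.delta')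
  ultimately have ae: "AE z in M. ?g z = f z"
    by (auto elim!: AE_I' simp: space)
  have f: "f \<in> borel_measurable M"
    using assms(2,5) measurable_cong_sets by blast
  show "integrable M f"
    using integrable_cong_AE_imp[OF g f ae] .
  have "integral\<^sup>L M f = integral\<^sup>L M ?g"
    using integral_cong_AE[OF borel_measurable_integrable[OF g] f ae] by simp
  also have "\<dots> = (\<Sum>y\<in>S. measure M {y} * f y)"
    using assms(2)
    by (simp add: Bochner_Integration.integral_sum integrable_real_indicator less_top[symmetric]
        space mult.commute)
  finally show "integral\<^sup>L M f = (\<Sum>y\<in>S. measure M {y} * f y)" .
qed

lemma integral_dirac_comb:
  fixes x :: "nat \<Rightarrow> 'a::t1_space" and f :: "'a \<Rightarrow> real"
  assumes "inj_on x {..<n}" and "\<And>j. j < n \<Longrightarrow> w j \<ge> 0" and "f \<in> borel_measurable borel"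
  shows "integrable (dirac_comb n w x) f"
    and "integral\<^sup>L (dirac_comb n w x) f = (\<Sum>j<n. w j * f (x j))"
proof -
  have "finite_measure (dirac_comb n w x)"
    by (intro finite_measureI) (simp add: emeasure_dirac_comb)
  note concentrated = integral_concentrated_finite[OF this sets_dirac_comb finite_imageI[OF finite_lessThan]
      emeasure_dirac_comb_outside assms(3)]
  show "integrable (dirac_comb n w x) f"
    by (fact concentrated(1))
  show "integral\<^sup>L (dirac_comb n w x) f = (\<Sum>j<n. w j * f (x j))"
    using assms(1,2) by (simp add: concentrated(2) sum.reindex measure_dirac_comb_point)
qed

lemma dirac_comb_in_moment_set_iff:
  fixes \<phi> :: "nat \<Rightarrow> 'a::t1_space \<Rightarrow> real"
  assumes "\<And>i. i < m \<Longrightarrow> continuous_on UNIV (\<phi> i)"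
    and "inj_on x {..<n}" and "\<And>j. j < n \<Longrightarrow> w j \<ge> 0"
  shows "dirac_comb n w x \<in> moment_set m \<phi> \<longleftrightarrow> affine_coeffs m n (\<lambda>j i. \<phi> i (x j)) (\<lambda>i. 0) w"
proof -
  have "emeasure (dirac_comb n w x) UNIV = ennreal (\<Sum>j<n. w j)"
    using assms(3) by (simp add: emeasure_dirac_comb) (intro sum_ennreal, simp)
  moreover have "(\<Sum>j<n. w j) \<ge> 0"
    using assms(3) by (intro sum_nonneg) simp
  ultimately have mass: "emeasure (dirac_comb n w x) (space (dirac_comb n w x)) = 1 \<longleftrightarrow> (\<Sum>j<n. w j) = 1"
    by simp
  have moments: "integrable (dirac_comb n w x) (\<phi> i) \<and> integral\<^sup>L (dirac_comb n w x) (\<phi> i) = 0 \<longleftrightarrow>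
      0 = (\<Sum>j<n. w j * \<phi> i (x j))" if "i < m" for i
    using integral_dirac_comb[OF assms(2,3) borel_measurable_continuous_onI[OF assms(1)[OF that]]]
    by auto
  show ?thesis
    unfolding moment_set_def affine_coeffs_def mem_Collect_eq mass
    using moments by auto
qed

lemma dominated_by_dirac_comb:
  fixes \<nu> :: "'a::t1_space measure"
  assumes "sets \<nu> = sets borel" and "emeasure \<nu> UNIV \<noteq> \<infinity>" and "0 < c"
    and "\<And>A. A \<in> sets borel \<Longrightarrow> ennreal c * emeasure \<nu> A \<le> emeasure (dirac_comb n w x) A"
    and "inj_on x {..<n}"
  shows "\<nu> = dirac_comb n (\<lambda>j. measure \<nu> {x j}) x"
proof (rule measure_eqI)
  have space: "space \<nu> = UNIV" using sets_eq_imp_space_eq[OF assms(1)] by simp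
  interpret finite_measure \<nu>
    using assms(2) space by (intro finite_measureI) simp
  have "UNIV - x ` {..<n} \<in> sets borel"
    by (intro borel_open) (auto intro: finite_imp_closed)
  then have "ennreal c * emeasure \<nu> (UNIV - x ` {..<n}) \<le> 0"
    using assms(4) emeasure_dirac_comb_outside[of n w x] by fastforce
  then have null: "emeasure \<nu> (UNIV - x ` {..<n}) = 0"
    using assms(3) by simp
  show "sets \<nu> = sets (dirac_comb n (\<lambda>j. measure \<nu> {x j}) x)"
    using assms(1) by simp
  fix A assume "A \<in> sets \<nu>"
  then have "A \<in> sets borel" using assms(1) by simp
  then have "emeasure \<nu> A = (\<Sum>y\<in>x ` {..<n}. emeasure \<nu> {y} * indicator A y)"
    by (intro emeasure_concentrated_finite[OF assms(1) _ null]) simp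
  also have "\<dots> = (\<Sum>j<n. ennreal (measure \<nu> {x j}) * indicator A (x j))"
    using assms(5) by (simp only: sum.reindex o_def emeasure_eq_measure)
  also have "\<dots> = emeasure (dirac_comb n (\<lambda>j. measure \<nu> {x j}) x) A"
    using \<open>A \<in> sets borel\<close> by (simp only: emeasure_dirac_comb)
  finally show "emeasure \<nu> A = emeasure (dirac_comb n (\<lambda>j. measure \<nu> {x j}) x) A" .
qed

lemma emeasure_dirac_comb_convex_combination:
  assumes "0 \<le> t" and "t \<le> 1" and "\<And>j. j < n \<Longrightarrow> l j \<ge> 0" and "\<And>j. j < n \<Longrightarrow> l' j \<ge> 0"
    and "A \<in> sets borel"
  shows "emeasure (dirac_comb n (\<lambda>j. t * l j + (1 - t) * l' j) x) A =
    ennreal t * emeasure (dirac_comb n l x) A + ennreal (1 - t) * emeasure (dirac_comb n l' x) A"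
proof -
  have "ennreal (t * l j + (1 - t) * l' j) * indicator A (x j) =
      ennreal t * (ennreal (l j) * indicator A (x j)) + ennreal (1 - t) * (ennreal (l' j) * indicator A (x j))"
    if "j \<in> {..<n}" for j
  proof -
    have "ennreal (t * l j + (1 - t) * l' j) = ennreal t * ennreal (l j) + ennreal (1 - t) * ennreal (l' j)"
      using assms(1-4) that by (simp add: ennreal_plus ennreal_mult)
    then show ?thesis
      by (simp only: distrib_right mult.assoc)
  qed
  then have "(\<Sum>j<n. ennreal (t * l j + (1 - t) * l' j) * indicator A (x j)) =
      (\<Sum>j<n. ennreal t * (ennreal (l j) * indicator A (x j)) +
        ennreal (1 - t) * (ennreal (l' j) * indicator A (x j)))"
    by (rule sum.cong[OF refl])
  then show ?thesis
    by (simp only: emeasure_dirac_comb[OF assms(5)] sum.distrib sum_distrib_left)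
qed

lemma extreme_measureD:
  assumes "extreme_measure C \<mu>" and "\<nu>1 \<in> C" and "\<nu>2 \<in> C" and "0 < t" and "t < 1"
    and "\<forall>A\<in>sets \<mu>. emeasure \<mu> A = ennreal t * emeasure \<nu>1 A + ennreal (1 - t) * emeasure \<nu>2 A"
  shows "\<nu>1 = \<mu>"
  using assms unfolding extreme_measure_def by blast

lemma small_scaling_below:
  fixes w l :: "nat \<Rightarrow> real"
  assumes "\<And>j. j < n \<Longrightarrow> 0 < w j"
  obtains t where "0 < t" and "t < 1" and "\<And>j. j < n \<Longrightarrow> t * l j < w j"
proof -
  have "\<forall>j\<in>{..<n}. \<forall>\<^sub>F t in at_right 0. t * l j < w j"
  proof
    fix j assume "j \<in> {..<n}"
    have "((\<lambda>t. t * l j) \<longlongrightarrow> 0 * l j) (at_right 0)"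
      by (intro tendsto_mult tendsto_ident_at tendsto_const)
    then show "\<forall>\<^sub>F t in at_right 0. t * l j < w j"
      using assms \<open>j \<in> {..<n}\<close> by (intro order_tendstoD(2)) simp_all
  qed
  then have "\<forall>\<^sub>F t in at_right 0. \<forall>j\<in>{..<n}. t * l j < w j"
    by (intro eventually_ball_finite) simp_all
  moreover have "\<forall>\<^sub>F t in at_right (0::real). t \<in> {0<..<1}"
    by (rule eventually_at_right_real) simp
  ultimately have "\<forall>\<^sub>F t in at_right 0. t \<in> {0<..<1} \<and> (\<forall>j\<in>{..<n}. t * l j < w j)"
    by (rule eventually_conj[OF _ _, rotated])
  then obtain t where "t \<in> {0<..<1}" and "\<forall>j\<in>{..<n}. t * l j < w j"
    using eventually_happens'[OF trivial_limit_at_right_real] by blast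
  then show ?thesis
    by (intro that[of t]) simp_all
qed

lemma extreme_dirac_comb_imp_coeffs_eq:
  fixes \<phi> :: "nat \<Rightarrow> 'a::t1_space \<Rightarrow> real"
  assumes cont: "\<And>i. i < m \<Longrightarrow> continuous_on UNIV (\<phi> i)" and inj: "inj_on x {..<n}"
    and w: "conv_coeffs m n (\<lambda>j i. \<phi> i (x j)) (\<lambda>i. 0) w"
    and extreme: "extreme_measure (moment_set m \<phi>) (dirac_comb n w x)"
    and l: "conv_coeffs m n (\<lambda>j i. \<phi> i (x j)) (\<lambda>i. 0) l" and "k < n"
  shows "l k = w k"
proof -
  have w_pos: "\<And>j. j < n \<Longrightarrow> 0 < w j" and w_aff: "affine_coeffs m n (\<lambda>j i. \<phi> i (x j)) (\<lambda>i. 0) w"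
    and l_pos: "\<And>j. j < n \<Longrightarrow> 0 < l j" and l_aff: "affine_coeffs m n (\<lambda>j i. \<phi> i (x j)) (\<lambda>i. 0) l"
    using w l by (simp_all add: conv_coeffs_iff_affine_coeffs)
  obtain t where t: "0 < t" "t < 1" and below: "\<And>j. j < n \<Longrightarrow> t * l j < w j"
    using small_scaling_below[of n w l] w_pos by blast
  define l2 where "l2 j = (w j - t * l j) / (1 - t)" for j
  have "1 - t \<noteq> 0"
    using t by simp
  then have "1 - 1 / (1 - t) = - t / (1 - t)"
    by (simp add: field_simps)
  then have l2_comb: "l2 = (\<lambda>j. 1 / (1 - t) * w j + (1 - 1 / (1 - t)) * l j)"
    by (simp add: fun_eq_iff l2_def diff_divide_distrib)
  have w_split: "w = (\<lambda>j. t * l j + (1 - t) * l2 j)"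
    using \<open>1 - t \<noteq> 0\<close> by (simp add: fun_eq_iff l2_def)
  have l2_pos: "0 < l2 j" if "j < n" for j
    using below[OF that] t by (simp add: l2_def)
  have l2_aff: "affine_coeffs m n (\<lambda>j i. \<phi> i (x j)) (\<lambda>i. 0) l2"
    unfolding l2_comb by (rule affine_coeffs_combination[OF w_aff l_aff])
  have "dirac_comb n l x \<in> moment_set m \<phi>" and "dirac_comb n l2 x \<in> moment_set m \<phi>"
    using l_pos l_aff l2_pos l2_aff
    by (simp_all add: dirac_comb_in_moment_set_iff[OF cont inj] less_imp_le)
  moreover have "\<forall>A\<in>sets (dirac_comb n w x). emeasure (dirac_comb n w x) A =
      ennreal t * emeasure (dirac_comb n l x) A + ennreal (1 - t) * emeasure (dirac_comb n l2 x) A"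
    using t l_pos l2_pos
    by (subst w_split, intro ballI emeasure_dirac_comb_convex_combination) (auto intro: less_imp_le)
  ultimately have "dirac_comb n l x = dirac_comb n w x"
    by (rule extreme_measureD[OF extreme _ _ t])
  have "l k = measure (dirac_comb n l x) {x k}"
    using l_pos by (simp add: measure_dirac_comb_point[OF inj \<open>k < n\<close>] less_imp_le)
  also have "\<dots> = measure (dirac_comb n w x) {x k}"
    by (simp only: \<open>dirac_comb n l x = dirac_comb n w x\<close>)
  also have "\<dots> = w k"
    using w_pos by (simp add: measure_dirac_comb_point[OF inj \<open>k < n\<close>] less_imp_le)
  finally show "l k = w k" .
qed

lemma dominated_in_moment_set_eq_dirac_comb:
  fixes \<phi> :: "nat \<Rightarrow> 'a::t1_space \<Rightarrow> real"
  assumes cont: "\<And>i. i < m \<Longrightarrow> continuous_on UNIV (\<phi> i)" and inj: "inj_on x {..<n}"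
    and w: "conv_coeffs m n (\<lambda>j i. \<phi> i (x j)) (\<lambda>i. 0) w"
    and unique: "\<forall>l. conv_coeffs m n (\<lambda>j i. \<phi> i (x j)) (\<lambda>i. 0) l \<longrightarrow> (\<forall>j<n. l j = w j)"
    and \<nu>: "\<nu> \<in> moment_set m \<phi>" and "0 < c"
    and dominated: "\<And>A. A \<in> sets borel \<Longrightarrow> ennreal c * emeasure \<nu> A \<le> emeasure (dirac_comb n w x) A"
  shows "\<nu> = dirac_comb n w x"
proof -
  define a where "a j = measure \<nu> {x j}" for j
  have "sets \<nu> = sets borel" and "emeasure \<nu> (space \<nu>) = 1"
    using \<nu> by (simp_all add: moment_set_def)
  then have "\<nu> = dirac_comb n a x"
    unfolding a_def using \<open>0 < c\<close> dominated inj
    by (intro dominated_by_dirac_comb) (simp_all add: sets_eq_imp_space_eq[of \<nu> borel])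
  then have a_aff: "affine_coeffs m n (\<lambda>j i. \<phi> i (x j)) (\<lambda>i. 0) a"
    using \<nu> by (simp add: dirac_comb_in_moment_set_iff[OF cont inj] a_def)
  have w_pos: "\<And>j. j < n \<Longrightarrow> 0 < w j" and w_aff: "affine_coeffs m n (\<lambda>j i. \<phi> i (x j)) (\<lambda>i. 0) w"
    using w by (simp_all add: conv_coeffs_iff_affine_coeffs)
  have "affine_coeffs m n (\<lambda>j i. \<phi> i (x j)) (\<lambda>i. 0) (\<lambda>j. 1/2 * w j + (1 - 1/2) * a j)"
    by (rule affine_coeffs_combination[OF w_aff a_aff])
  moreover have "0 < 1/2 * w j + (1 - 1/2) * a j" if "j < n" for j
    using w_pos[OF that] by (simp add: a_def add_pos_nonneg)
  ultimately have "conv_coeffs m n (\<lambda>j i. \<phi> i (x j)) (\<lambda>i. 0) (\<lambda>j. 1/2 * w j + (1 - 1/2) * a j)"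
    unfolding conv_coeffs_iff_affine_coeffs by blast
  then have midpoint_eq: "1/2 * w j + (1 - 1/2) * a j = w j" if "j < n" for j
    using unique that by blast
  have "a j = w j" if "j < n" for j
    using midpoint_eq[OF that] by simp
  then have "dirac_comb n a x = dirac_comb n w x"
    by (rule dirac_comb_cong)
  with \<open>\<nu> = dirac_comb n a x\<close> show ?thesis
    by simp
qed

lemma unique_coeffs_imp_extreme_dirac_comb:
  fixes \<phi> :: "nat \<Rightarrow> 'a::t1_space \<Rightarrow> real"
  assumes cont: "\<And>i. i < m \<Longrightarrow> continuous_on UNIV (\<phi> i)" and inj: "inj_on x {..<n}"
    and w: "conv_coeffs m n (\<lambda>j i. \<phi> i (x j)) (\<lambda>i. 0) w"
    and unique: "\<forall>l. conv_coeffs m n (\<lambda>j i. \<phi> i (x j)) (\<lambda>i. 0) l \<longrightarrow> (\<forall>j<n. l j = w j)"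
  shows "extreme_measure (moment_set m \<phi>) (dirac_comb n w x)"
  unfolding extreme_measure_def
proof (intro conjI ballI allI impI)
  show "dirac_comb n w x \<in> moment_set m \<phi>"
    using w by (simp add: conv_coeffs_iff_affine_coeffs dirac_comb_in_moment_set_iff[OF cont inj] less_imp_le)
  fix \<nu>1 \<nu>2 t
  assume \<nu>: "\<nu>1 \<in> moment_set m \<phi>" "\<nu>2 \<in> moment_set m \<phi>"
    and split: "0 < t \<and> t < 1 \<and> (\<forall>A\<in>sets (dirac_comb n w x). emeasure (dirac_comb n w x) A =
      ennreal t * emeasure \<nu>1 A + ennreal (1 - t) * emeasure \<nu>2 A)"
  show "\<nu>1 = dirac_comb n w x"
    using split by (intro dominated_in_moment_set_eq_dirac_comb[OF cont inj w unique \<nu>(1), of t])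
      (auto intro: add_increasing2)
  show "\<nu>2 = dirac_comb n w x"
    using split by (intro dominated_in_moment_set_eq_dirac_comb[OF cont inj w unique \<nu>(2), of "1 - t"])
      (auto intro: add_increasing)
qed

theorem theorem3p3:
  fixes \<phi> :: "nat \<Rightarrow> 'a::t2_space \<Rightarrow> real"
    and m n :: nat and x :: "nat \<Rightarrow> 'a" and w :: "nat \<Rightarrow> real"
  assumes "compact (UNIV :: 'a set)"
    and "\<And>i. i < m \<Longrightarrow> continuous_on UNIV (\<phi> i)"
    and "1 \<le> n" and "n \<le> m + 1"
    and "inj_on x {..<n}"
    and "\<And>j. j < n \<Longrightarrow> w j > 0"
    and "(\<Sum>j<n. w j) = 1"
    and "\<And>i. i < m \<Longrightarrow> (\<Sum>j<n. \<phi> i (x j) * w j) = 0"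
  shows "extreme_measure (moment_set m \<phi>) (dirac_comb n w x) \<longleftrightarrow>
         interior_conv_point m n (\<lambda>j i. \<phi> i (x j)) (\<lambda>i. 0)"
proof -
  note cont = assms(2) and inj = assms(5)
  have w: "conv_coeffs m n (\<lambda>j i. \<phi> i (x j)) (\<lambda>i. 0) w"
    using assms(6-8) by (simp add: conv_coeffs_def mult.commute)
  show ?thesis
    unfolding interior_conv_point_iff_unique_coeffs[OF w]
    using extreme_dirac_comb_imp_coeffs_eq[OF cont inj w] unique_coeffs_imp_extreme_dirac_comb[OF cont inj w]
    by blast
qed

end
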